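(* Let $p\ne q$ be primes, $G=\mathbb{Z}_p^2\times\mathbb{Z}_q^2$, and let $S\subseteq G$ be spectral with $\gcd(|S|,p^2q^2)=pq$ and $pq<|S|<pq\min\{p,q\}$. Then for every nonzero $u\in\mathbb{Z}_p^2$ there is $x_u\in\mathbb{Z}_q^2$ with $\chi_{u+x_u}(S)=0$, and for every nonzero $v\in\mathbb{Z}_q^2$ there is $y_v\in\mathbb{Z}_p^2$ with $\chi_{v+y_v}(S)=0$.
   Context: Elements of $G$ are written $a+b$ with $a\in\mathbb{Z}_p^2$, $b\in\mathbb{Z}_q^2$. For $w=u+v$ define $\chi_w(a+b)=\exp\big(2\pi i(\tfrac{u\cdot a}{p}+\tfrac{v\cdot b}{q})\big)$ and $\chi(S)=\sum_{s\in S}\chi(s)$. $S$ is spectral if there is $\Lambda\subseteq G$ with $|\Lambda|=|S|$ and $\chi_{\lambda-\lambda'}(S)=0$ for all distinct $\lambda,\lambda'\in\Lambda$. *)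

theory Defs
  imports "HOL-Analysis.Analysis" "HOL-Computational_Algebra.Primes"
begin

text \<open>Z_n^2 represented by pairs of integers with residues in {0..<n};
  G = Z_p^2 x Z_q^2 represented by pairs (a, b) with a in Z_p^2, b in Z_q^2.
  The element a+b of G is the pair (a,b).\<close>

type_synonym elt = "(int \<times> int) \<times> (int \<times> int)"

definition Zsq :: "nat \<Rightarrow> (int \<times> int) set" where
  "Zsq n = {0..<int n} \<times> {0..<int n}"

definition Gset :: "nat \<Rightarrow> nat \<Rightarrow> elt set" where
  "Gset p q = Zsq p \<times> Zsq q"

definition dot2 :: "int \<times> int \<Rightarrow> int \<times> int \<Rightarrow> int" where
  "dot2 x y = fst x * fst y + snd x * snd y"

definition subG :: "nat \<Rightarrow> nat \<Rightarrow> elt \<Rightarrow> elt \<Rightarrow> elt" where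
  "subG p q x y =
     (((fst (fst x) - fst (fst y)) mod int p, (snd (fst x) - snd (fst y)) mod int p),
      ((fst (snd x) - fst (snd y)) mod int q, (snd (snd x) - snd (snd y)) mod int q))"

definition chi :: "nat \<Rightarrow> nat \<Rightarrow> elt \<Rightarrow> elt \<Rightarrow> complex" where
  "chi p q w g = cis (2 * pi * (real_of_int (dot2 (fst w) (fst g)) / real p
                              + real_of_int (dot2 (snd w) (snd g)) / real q))"

definition chiS :: "nat \<Rightarrow> nat \<Rightarrow> elt \<Rightarrow> elt set \<Rightarrow> complex" where
  "chiS p q w S = (\<Sum>s\<in>S. chi p q w s)"

definition spectral :: "nat \<Rightarrow> nat \<Rightarrow> elt set \<Rightarrow> bool" where
  "spectral p q S \<longleftrightarrow> (\<exists>L. L \<subseteq> Gset p q \<and> card L = card S \<and>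
      (\<forall>l\<in>L. \<forall>m\<in>L. l \<noteq> m \<longrightarrow> chiS p q (subG p q l m) S = 0))"

end

theory Submission
  imports Defs "Berlekamp_Zassenhaus.Factor_Bound"
begin

(* A vanishing character sum chi_w(S) = 0 is a vanishing integer combination of pq-th roots of
   unity, so it stays zero under every Galois automorphism zeta -> zeta^t with t coprime to pq;
   this is Dedekind's argument, reducing the minimal polynomial of zeta modulo primes r not dividing
   pq.  By the Chinese remainder theorem the Z_p^2 and Z_q^2 parts of w can thus be rescaled by
   units independently.  As q^2 does not divide |S|, Fourier inversion on Z_q^2 gives y <> 0 with
   chi_(0+y)(S) <> 0.  If some u <> 0 had chi_(u+x)(S) <> 0 for all x, then on a spectrum Lambda
   the map l -> (det(u, l_p) mod p, det(y, l_q) mod q) would be injective: two points with the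
   same image differ by (j u, k y) modulo (p, q), and rescaling turns their orthogonality into
   chi_(u+x)(S) = 0 or chi_(0+y)(S) = 0.  Hence |S| = |Lambda| <= pq, a contradiction.  The claim
   for v follows by exchanging p and q. *)

(* Berlekamp_Zassenhaus imports HOL-Algebra, whose monom and smult would otherwise shadow the
   polynomial ones.  It also rebinds coprime to a class-generic copy, which the simp rule
   coprime_iff_coprime identifies with the usual notion. *)
hide_const (open) up_ring.monom module.smult

section \<open>Integer polynomials and roots of unity\<close>

lemma irreducible_dvd_of_common_root:
  fixes f g :: "int poly" and x :: "'a :: field_char_0"
  assumes "irreducible f" and "poly (of_int_poly f) x = 0" and "poly (of_int_poly g) x = 0"
  shows "f dvd g"
proof (rule ccontr)
  assume "\<not> f dvd g"
  moreover have "gcd f g dvd f" by simp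
  ultimately have "is_unit (gcd f g)"
    using irreducibleD'[OF \<open>irreducible f\<close>] by (meson dvd_trans gcd_dvd2)
  then have "gcd (of_int_poly f) (of_int_poly g :: rat poly) = 1"
    by (simp add: gcd_rat_to_gcd_int is_unit_gcd)
  then obtain a b :: "rat poly" where bezout: "a * of_int_poly f + b * of_int_poly g = 1"
    by (metis bezout_coefficients_fst_snd)
  interpret of_rat_poly: map_poly_inj_idom_hom "of_rat :: rat \<Rightarrow> 'a" ..
  have "(1 :: 'a) = poly (map_poly of_rat (a * of_int_poly f + b * of_int_poly g)) x"
    using bezout by simp
  also have "\<dots> = poly (map_poly of_rat a) x * poly (of_int_poly f) x
                + poly (map_poly of_rat b) x * poly (of_int_poly g) x"
    by (simp add: of_rat_poly.hom_add of_rat_poly.hom_mult map_poly_map_poly o_def)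
  finally show False using assms(2,3) by simp
qed

lemma monic_irreducible_factor_with_root:
  fixes E :: "int poly" and x :: "'a :: idom"
  assumes "monic E" and "poly (of_int_poly E) x = 0"
  obtains f where "irreducible f" "monic f" "f dvd E" "poly (of_int_poly f) x = 0"
proof -
  have "E \<noteq> 0" using \<open>monic E\<close> by auto
  then have "E dvd prod_mset (prime_factorization E)"
    by (metis dvd_normalize_iff dvd_refl prod_mset_prime_factorization_weak)
  with assms(2) have "poly (of_int_poly (prod_mset (prime_factorization E))) x = 0"
    by (auto elim!: dvdE simp: of_int_poly_hom.hom_mult)
  moreover have "poly (of_int_poly (prod_mset F)) x = (\<Prod>f\<in>#F. poly (of_int_poly f) x)" for F
    by (induct F) (simp_all add: of_int_poly_hom.hom_mult)
  ultimately obtain f where f: "f \<in># prime_factorization E" "poly (of_int_poly f) x = 0"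
    by auto
  have "f dvd E" using f(1) by auto
  then have "is_unit (lead_coeff f)"
    using \<open>monic E\<close> by (metis lead_coeff_mult dvdE dvdI)
  moreover have "unit_factor (lead_coeff f) = 1"
  proof -
    have "normalize f = f" using f(1) by (simp add: in_prime_factors_imp_prime normalize_prime)
    moreover have "f \<noteq> 0" using f(1) by auto
    ultimately have "unit_factor f = 1" by (metis mult_cancel_right2 unit_factor_mult_normalize)
    then show ?thesis by (simp add: unit_factor_poly_def)
  qed
  ultimately have "monic f"
    by (metis unit_factor_mult_normalize is_unit_normalize mult.right_neutral)
  moreover have "irreducible f"
    using f(1) by (intro prime_elem_imp_irreducible prime_imp_prime_elem) auto
  ultimately show thesis using that \<open>f dvd E\<close> f(2) by blast
qed

lemma fermat_little_int:
  assumes "prime r"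
  shows "[a ^ r = a] (mod int r)"
proof (cases "int r dvd a")
  case True
  then have a0: "[a = 0] (mod int r)" by (simp add: cong_0_iff)
  have "[a ^ r = 0] (mod int r)"
    using cong_pow[OF a0, of r] prime_gt_0_nat[OF assms] by (simp add: zero_power)
  then show ?thesis using a0 by (meson cong_sym cong_trans)
next
  case False
  define b where "b = nat (a mod int r)"
  have r0: "r > 0" using \<open>prime r\<close> prime_gt_0_nat by blast
  have ab: "[int b = a] (mod int r)"
    using r0 by (simp add: b_def cong_def)
  with False have "\<not> r dvd b"
    by (metis cong_dvd_iff int_dvd_int_iff)
  with \<open>prime r\<close> have "[b ^ (r - 1) = 1] (mod r)"
    by (rule fermat_theorem)
  then have "[int (b ^ (r - 1)) = int 1] (mod int r)"
    by (simp only: cong_int_iff)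
  then have "[int b ^ (r - 1) = 1] (mod int r)"
    by simp
  then have "[a ^ (r - 1) = 1] (mod int r)"
    using ab by (metis cong_pow cong_sym cong_trans)
  then have "[a * a ^ (r - 1) = a * 1] (mod int r)"
    by (rule cong_scalar_left)
  moreover have "a * a ^ (r - 1) = a ^ r"
    using r0 by (simp flip: power_Suc)
  ultimately show ?thesis by simp
qed

context poly_mod
begin

lemma dvdm_trans: "f dvdm g \<Longrightarrow> g dvdm h \<Longrightarrow> f dvdm h"
  unfolding dvdm_def by (metis mult.assoc mult_Mp(2) mult_Mp(1))

lemma dvdm_mult: "f dvdm g \<Longrightarrow> f' dvdm g' \<Longrightarrow> f * f' dvdm g * g'"
  unfolding dvdm_def by (metis mult.assoc mult.left_commute mult_Mp)

lemma dvdm_diff: "f dvdm g \<Longrightarrow> f dvdm h \<Longrightarrow> f dvdm g - h"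
  by (metis diff_conv_add_uminus dvdm_add dvdm_uminus)

lemma dvdm_cong: "g =m h \<Longrightarrow> f dvdm g \<longleftrightarrow> f dvdm h"
  unfolding dvdm_def by simp

lemma Mp_add_smult_m [simp]: "Mp (f + smult m g) = Mp f"
  by (metis Mp_smult_m_0 add.right_neutral plus_Mp(2))

lemma eq_m_add: "f =m f' \<Longrightarrow> g =m g' \<Longrightarrow> f + g =m f' + g'"
  by (metis plus_Mp)

lemma eq_m_diff: "f =m f' \<Longrightarrow> g =m g' \<Longrightarrow> f - g =m f' - g'"
  by (metis minus_Mp)

lemma eq_m_mult: "f =m f' \<Longrightarrow> g =m g' \<Longrightarrow> f * g =m f' * g'"
  by (metis mult_Mp)

end

context poly_mod_prime
begin

lemma power_p_eq_m_add: "(f + g) ^ nat p =m f ^ nat p + g ^ nat p"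
proof -
  define r where "r = nat p"
  have r: "prime r" "p = int r"
    using prime prime_ge_0_int by (simp_all add: r_def prime_nat_iff_prime)
  define T where "T k = smult (int (r choose k)) (f ^ k * g ^ (r - k))" for k
  define U where "U k = smult (int ((r choose k) div r)) (f ^ k * g ^ (r - k))" for k
  have "(f + g) ^ r = (\<Sum>k\<le>r. T k)"
    by (simp add: T_def binomial_ring of_nat_poly)
  also have "\<dots> = (\<Sum>k\<in>{0, r}. T k) + (\<Sum>k\<in>{..r} - {0, r}. T k)"
    by (subst sum.subset_diff[of "{0, r}"]) auto
  also have "(\<Sum>k\<in>{0, r}. T k) = f ^ r + g ^ r"
    using prime_gt_0_nat[OF r(1)] by (simp add: T_def)
  also have "(\<Sum>k\<in>{..r} - {0, r}. T k) = smult p (\<Sum>k\<in>{..r} - {0, r}. U k)"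
    unfolding smult_sum2
  proof (rule sum.cong[OF refl])
    fix k assume "k \<in> {..r} - {0, r}"
    then have "r dvd r choose k" by (intro dvd_choose_prime) (use r(1) in auto)
    then have "int (r choose k) = p * int ((r choose k) div r)"
      unfolding r(2) by (simp flip: of_nat_mult)
    then show "T k = smult p (U k)" by (simp add: T_def U_def)
  qed
  finally show ?thesis by (simp add: r_def)
qed

lemma const_power_p_eq_m: "[:a:] ^ nat p =m [:a:]"
proof -
  have "[a ^ nat p = a] (mod p)"
    using fermat_little_int[of "nat p"] prime prime_ge_0_int by (simp add: prime_nat_iff_prime)
  then show ?thesis
    by (simp add: poly_const_pow Mp_const_poly cong_def)
qed

lemma power_p_eq_m_pcompose: "f ^ nat p =m f \<circ>\<^sub>p monom 1 (nat p)"
proof (induct f)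
  case 0
  show ?case using prime by (simp add: zero_power prime_gt_0_int)
next
  case (pCons a f)
  have "pCons a f = [:a:] + monom 1 1 * f"
    by (simp add: monom_Suc pCons_one)
  then have "pCons a f ^ nat p =m [:a:] ^ nat p + (monom 1 1 * f) ^ nat p"
    using power_p_eq_m_add by presburger
  also have "(monom 1 1 * f) ^ nat p = monom 1 (nat p) * f ^ nat p"
    by (simp add: power_mult_distrib monom_power)
  finally have "pCons a f ^ nat p =m [:a:] ^ nat p + monom 1 (nat p) * f ^ nat p" .
  also have "[:a:] ^ nat p + monom 1 (nat p) * f ^ nat p
      =m [:a:] + monom 1 (nat p) * (f \<circ>\<^sub>p monom 1 (nat p))"
    using const_power_p_eq_m pCons(2) by (intro eq_m_add eq_m_mult) simp_all
  finally show ?case by (simp add: pcompose_pCons)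
qed

lemma monic_smult_m:
  assumes "\<not> h =m 0"
  obtains c where "monic (Mp (smult c h))" and "degree (Mp (smult c h)) = degree_m h"
proof -
  define l where "l = lead_coeff (Mp h)"
  have "l \<noteq> 0" using assms unfolding l_def by simp
  moreover have "M l = l"
    unfolding l_def Mp_coeff by simp
  ultimately have "\<not> p dvd l"
    by (metis M_def dvd_imp_mod_0)
  then have "coprime l p"
    using prime by (metis prime_imp_coprime coprime_iff_coprime coprime_commute)
  define c where "c = inverse_mod l p"
  have cl: "M (c * l) = 1"
    unfolding c_def by (rule inverse_mod_coprime[OF prime \<open>coprime l p\<close>])
  then have "c \<noteq> 0" by auto
  have "degree (Mp (smult c (Mp h))) = degree (smult c (Mp h))"
    using cl m1 \<open>c \<noteq> 0\<close> by (intro degree_m_eq) (simp_all add: M_def l_def)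
  with \<open>c \<noteq> 0\<close> have deg: "degree (Mp (smult c h)) = degree_m h" by simp
  moreover have "monic (Mp (smult c h))"
    using cl \<open>c \<noteq> 0\<close> deg by (simp add: Mp_coeff l_def)
  ultimately show thesis using that by blast
qed

lemma monic_common_divisor_bezout_m:
  assumes "\<not> f =m 0"
  obtains d a b where "monic d" "d dvdm f" "d dvdm g" "d =m a * f + b * g"
proof -
  define I where "I = {h. Mp h \<noteq> 0 \<and> (\<exists>a b. h =m a * f + b * g)}"
  have "Mp f \<noteq> 0" and "f =m 1 * f + 0 * g" using assms by simp_all
  then have "f \<in> I" unfolding I_def by blast
  then obtain h where h: "h \<in> I" and h_min: "\<And>h'. h' \<in> I \<Longrightarrow> degree_m h \<le> degree_m h'"
    using ex_has_least_nat[of "\<lambda>h. h \<in> I" f degree_m] by blast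
  then obtain a b where hab: "h =m a * f + b * g" and h0: "\<not> h =m 0"
    unfolding I_def by auto
  obtain c where d: "monic (Mp (smult c h))" "degree (Mp (smult c h)) = degree_m h"
    by (rule monic_smult_m[OF h0])
  define d where "d = Mp (smult c h)"
  have d_comb: "d =m smult c a * f + smult c b * g"
    using hab by (metis d_def Mp_Mp Mp_smult(2) smult_add_right mult_smult_left)
  have d_dvdm: "d dvdm h'" if h': "h' =m a' * f + b' * g" for h' a' b'
  proof -
    obtain Q R where QR: "pseudo_divmod h' d = (Q, R)" by (cases "pseudo_divmod h' d")
    have "d \<noteq> 0" using d(1) by (auto simp: d_def)
    with pseudo_divmod[OF _ QR] d(1) have div: "h' = d * Q + R"
      and R: "R = 0 \<or> degree R < degree d" by (auto simp: d_def)
    have "R = h' - d * Q" using div by simp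
    also have "\<dots> =m (a' * f + b' * g) - (smult c a * f + smult c b * g) * Q"
      using h' d_comb by (intro eq_m_diff eq_m_mult) simp_all
    also have "(a' * f + b' * g) - (smult c a * f + smult c b * g) * Q
        = (a' - Q * smult c a) * f + (b' - Q * smult c b) * g"
      by (simp add: algebra_simps)
    finally have "R \<in> I \<or> Mp R = 0" unfolding I_def by blast
    moreover have "\<not> degree_m h \<le> degree_m R" if "R \<noteq> 0"
      using R that d(2) degree_m_le[of R] by (simp add: d_def)
    ultimately have "Mp R = 0" using h_min by fastforce
    then show ?thesis
      unfolding dvdm_def div by (metis add_0_right plus_Mp(2))
  qed
  show thesis
  proof (rule that)
    show "monic d" using d(1) by (simp add: d_def)
    show "d dvdm f" by (rule d_dvdm[of f 1 0]) simp
    show "d dvdm g" by (rule d_dvdm[of g 0 1]) simp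
  qed fact
qed

lemma dvdm_1_of_dvdm_power:
  assumes "1 =m a * f + b * g" and "f dvdm g ^ k"
  shows "f dvdm 1"
  using assms(2)
proof (induct k)
  case (Suc k)
  have "g ^ k * (a * f + b * g) = f * (a * g ^ k) + b * g ^ Suc k"
    by (simp add: algebra_simps)
  moreover have "f dvdm f * (a * g ^ k) + b * g ^ Suc k"
  proof (rule dvdm_add)
    show "f dvdm f * (a * g ^ k)" by (intro dvd_imp_dvdm) simp
    show "f dvdm b * g ^ Suc k" using Suc(2) dvdm_factor by (metis mult.commute)
  qed
  ultimately have "f dvdm g ^ k * (a * f + b * g)" by simp
  moreover have "g ^ k * (a * f + b * g) =m g ^ k"
    using assms(1) by (metis mult.right_neutral mult_Mp(2))
  ultimately show ?case using Suc(1) dvdm_cong by blast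
qed simp

lemma not_square_dvdm_monom_minus_1:
  assumes "\<not> p dvd int n" and "monic d" and "degree d > 0"
  shows "\<not> d * d dvdm monom 1 n - 1"
proof
  define E :: "int poly" where "E = monom 1 n - 1"
  assume "d * d dvdm monom 1 n - 1"
  then obtain Q H where EQ: "E = Q * (d * d) + smult p H"
    unfolding E_def using dvdm_imp_div_mod by blast
  then have "d dvdm E"
    by (intro div_mod_imp_dvdm) (metis mult.assoc mult.commute)
  moreover have "d dvdm pderiv E"
  proof (intro div_mod_imp_dvdm exI)
    show "pderiv E = (pderiv Q * d + Q * pderiv d + Q * pderiv d) * d + smult p (pderiv H)"
      unfolding EQ by (simp add: pderiv_add pderiv_mult pderiv_smult algebra_simps)
  qed
  moreover have "[:- int n:] = smult (int n) E - monom 1 1 * pderiv E"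
    using assms(1) by (cases n) (simp_all add: E_def pderiv_monom pderiv_diff mult_monom smult_monom smult_diff_right)
  ultimately have "d dvdm [:- int n:]"
    by (metis dvdm_diff dvdm_smult dvdm_factor mult.commute)
  then have "(- int n) mod p = 0"
    using monic_dvdm_constant assms(2,3) by blast
  with assms(1) show False by (simp add: mod_eq_0_iff_dvd)
qed

lemma no_repeated_common_factor_m:
  assumes "monic f" and "degree f > 0" and "f dvdm g ^ k" and "f * g dvdm E"
    and square_free: "\<And>d. monic d \<Longrightarrow> degree d > 0 \<Longrightarrow> \<not> d * d dvdm E"
  shows False
proof -
  have "\<not> f =m 0"
    using assms(1,2) by (metis Mp_0 degree_0 monic_degree_m less_irrefl)
  then obtain d a b where d: "monic d" "d dvdm f" "d dvdm g" "d =m a * f + b * g"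
    by (rule monic_common_divisor_bezout_m)
  show False
  proof (cases "degree d = 0")
    case True
    with \<open>monic d\<close> have "d = 1" by (metis monic_degree_0)
    with d(4) assms(3) have f1: "f dvdm 1" by (intro dvdm_1_of_dvdm_power) auto
    have "degree f \<le> degree (1 :: int poly)"
      using dvdm_degree[OF \<open>monic f\<close> f1] by simp
    with \<open>degree f > 0\<close> show False by simp
  next
    case False
    have "d * d dvdm f * g" using d(2,3) by (rule dvdm_mult)
    with \<open>f * g dvdm E\<close> have "d * d dvdm E" by (blast intro: dvdm_trans)
    with square_free d(1) False show False by blast
  qed
qed

lemma not_mult_dvd_monom_minus_1:
  fixes f g :: "int poly"
  assumes "monic f" and "degree f > 0" and "f dvd g \<circ>\<^sub>p monom 1 (nat p)" and "\<not> p dvd int n"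
  shows "\<not> f * g dvd monom 1 n - 1"
proof
  assume "f * g dvd monom 1 n - 1"
  have "f dvdm g \<circ>\<^sub>p monom 1 (nat p)"
    using assms(3) by (rule dvd_imp_dvdm)
  then have "f dvdm g ^ nat p"
    using dvdm_cong[OF power_p_eq_m_pcompose[of g]] by blast
  moreover have "f * g dvdm monom 1 n - 1"
    using \<open>f * g dvd monom 1 n - 1\<close> by (rule dvd_imp_dvdm)
  ultimately show False
    using no_repeated_common_factor_m[OF assms(1,2)] not_square_dvdm_monom_minus_1[OF assms(4)]
    by blast
qed

end

lemma monic_monom_minus_1: "n > 0 \<Longrightarrow> monic (monom 1 n - 1 :: 'a :: comm_ring_1 poly)"
  using degree_add_eq_left[of "- 1" "monom (1 :: 'a) n"] by (simp add: degree_monom_eq)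

text \<open>Dedekind's argument: if \<open>f \<noteq> g\<close>, then \<open>f * g\<close> divides \<open>X\<^sup>n - 1\<close>, while \<open>f\<close> divides
  \<open>g(X\<^sup>r) \<equiv> g\<^sup>r (mod r)\<close>, so \<open>X\<^sup>n - 1\<close> would have a repeated factor modulo \<open>r\<close>.\<close>
lemma irreducible_factor_root_power_prime:
  fixes f g :: "int poly" and x :: "'a :: field_char_0"
  assumes "prime r" and "\<not> r dvd n"
    and f: "irreducible f" "monic f" "f dvd monom 1 n - 1" "poly (of_int_poly f) x = 0"
    and g: "irreducible g" "g dvd monom 1 n - 1" "poly (of_int_poly g) (x ^ r) = 0"
  shows "poly (of_int_poly f) (x ^ r) = 0"
proof (rule ccontr)
  assume f_ne: "poly (of_int_poly f) (x ^ r) \<noteq> 0"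
  have "degree f > 0"
  proof (rule ccontr)
    assume "\<not> degree f > 0"
    with f(2) have "f = 1" using monic_degree_0 by blast
    with f(4) show False by simp
  qed
  have "\<not> f dvd g"
  proof
    assume "f dvd g"
    with g(1) f(1) have "g dvd f" by (meson irreducibleD' irreducible_not_unit)
    with g(3) f_ne show False by (auto elim!: dvdE simp: of_int_poly_hom.hom_mult)
  qed
  obtain e where E: "monom 1 n - 1 = g * e" using g(2) by (elim dvdE)
  have "prime_elem f" using f(1) by (rule irreducible_imp_prime_poly)
  moreover have "f dvd g * e" using f(3) by (simp add: E)
  ultimately have "f dvd g \<or> f dvd e" by (rule prime_elem_dvd_multD)
  with \<open>\<not> f dvd g\<close> have "f * g dvd monom 1 n - 1"
    unfolding E by (simp add: mult.commute mult_dvd_mono)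
  moreover have "poly (of_int_poly (g \<circ>\<^sub>p monom 1 r)) x = 0"
    using g(3) by (simp add: hom_distribs poly_pcompose poly_monom)
  with f(1,4) have "f dvd g \<circ>\<^sub>p monom 1 r"
    by (rule irreducible_dvd_of_common_root)
  moreover have "poly_mod_prime (int r)"
    using assms(1) by (simp add: poly_mod_prime_def)
  ultimately show False
    using poly_mod_prime.not_mult_dvd_monom_minus_1[of "int r" f g n] f(2) \<open>degree f > 0\<close> assms(2)
    by simp
qed

lemma root_of_unity_power_prime_root:
  fixes P :: "int poly" and x :: "'a :: field_char_0"
  assumes "prime r" and "\<not> r dvd n" and "x ^ n = 1" and "poly (of_int_poly P) x = 0"
  shows "poly (of_int_poly P) (x ^ r) = 0"
proof -
  define E :: "int poly" where "E = monom 1 n - 1"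
  have "n > 0" using assms(2) by (rule contrapos_np) simp
  then have "monic E" unfolding E_def by (rule monic_monom_minus_1)
  have E_eval: "poly (of_int_poly E) y = y ^ n - 1" for y :: 'a
    by (simp add: E_def hom_distribs poly_monom)
  obtain f where f: "irreducible f" "monic f" "f dvd E" "poly (of_int_poly f) x = 0"
    using monic_irreducible_factor_with_root[OF \<open>monic E\<close>, of x] E_eval assms(3) by auto
  have "(x ^ r) ^ n = 1"
    using assms(3) by (metis mult.commute power_mult power_one)
  then obtain g where g: "irreducible g" "monic g" "g dvd E" "poly (of_int_poly g) (x ^ r) = 0"
    using monic_irreducible_factor_with_root[OF \<open>monic E\<close>, of "x ^ r"] E_eval by auto
  have "f dvd P"
    using f(1,4) assms(4) by (rule irreducible_dvd_of_common_root)
  moreover have "poly (of_int_poly f) (x ^ r) = 0"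
    using irreducible_factor_root_power_prime[OF assms(1,2) f(1,2) _ f(4) g(1) _ g(4)] f(3) g(3)
    by (simp add: E_def)
  ultimately show ?thesis
    by (auto elim!: dvdE simp: of_int_poly_hom.hom_mult)
qed

lemma root_of_unity_power_coprime_root:
  fixes P :: "int poly" and x :: "'a :: field_char_0"
  assumes "x ^ n = 1" and "poly (of_int_poly P) x = 0" and "coprime t n"
  shows "poly (of_int_poly P) (x ^ t) = 0"
  using assms(3)
proof (induct t rule: less_induct)
  case (less t)
  show ?case
  proof (cases "t \<le> 1")
    case True
    then consider "t = 0" | "t = 1" by linarith
    then show ?thesis
    proof cases
      case 1
      with less.prems have "n = 1" by simp
      with assms(1,2) 1 show ?thesis by simp
    qed (use assms(2) in simp)
  next
    case False
    then obtain r t' where r: "prime r" and t: "t = r * t'"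
      by (metis dvdE not_le prime_factor_nat nat_neq_iff)
    have "t' > 0" using False t by (cases t') auto
    moreover have "t' < t" using \<open>t' > 0\<close> prime_gt_1_nat[OF r] by (simp add: t)
    moreover have "coprime t' n"
      using less.prems t by simp
    ultimately have "poly (of_int_poly P) (x ^ t') = 0"
      using less.hyps by blast
    moreover have "(x ^ t') ^ n = 1"
      using assms(1) by (metis mult.commute power_mult power_one)
    moreover have "\<not> r dvd n"
      using less.prems r t by (metis coprime_common_divisor dvd_triv_left not_prime_unit coprime_iff_coprime)
    ultimately have "poly (of_int_poly P) ((x ^ t') ^ r) = 0"
      using root_of_unity_power_prime_root[OF r] by blast
    then show ?thesis
      by (simp add: t mult.commute flip: power_mult)
  qed
qed

definition unity_root :: "nat \<Rightarrow> int \<Rightarrow> complex" where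
  "unity_root n k = cis (2 * pi * of_int k / of_nat n)"

lemma unity_root_add: "unity_root n (a + b) = unity_root n a * unity_root n b"
  unfolding unity_root_def cis_mult by (simp add: add_divide_distrib distrib_left)

lemma unity_root_power: "unity_root n a ^ k = unity_root n (int k * a)"
  unfolding unity_root_def by (subst Complex.DeMoivre) (simp add: mult_ac)

lemma unity_root_eq_1_iff:
  assumes "n > 0"
  shows "unity_root n k = 1 \<longleftrightarrow> int n dvd k"
proof -
  have "unity_root n k = 1 \<longleftrightarrow> (\<exists>m::int. 2 * pi * of_int k / of_nat n = of_int (2 * m) * pi)"
    by (simp add: unity_root_def cis_conv_exp exp_eq_1)
  also have "\<dots> \<longleftrightarrow> (\<exists>m::int. real_of_int k = real_of_int (int n * m))"
    using assms by (intro ex_cong1) (auto simp: field_simps)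
  also have "\<dots> \<longleftrightarrow> int n dvd k"
    by (auto simp: dvd_def simp del: of_int_mult)
  finally show ?thesis .
qed

lemma unity_root_cong:
  assumes "n > 0" and "[a = b] (mod int n)"
  shows "unity_root n a = unity_root n b"
proof -
  have "unity_root n (a - b) = 1"
    using assms by (simp add: unity_root_eq_1_iff cong_iff_dvd_diff)
  then show ?thesis
    using unity_root_add[of n b "a - b"] by simp
qed

lemma sum_unity_root_galois:
  assumes "n > 0" and "coprime t (int n)" and "(\<Sum>s\<in>S. unity_root n (e s)) = 0"
  shows "(\<Sum>s\<in>S. unity_root n (t * e s)) = 0"
proof -
  define P :: "int poly" where "P = (\<Sum>s\<in>S. monom 1 (nat (e s mod int n)))"
  have P_eval: "poly (of_int_poly P) (unity_root n 1 ^ k) = (\<Sum>s\<in>S. unity_root n (int k * e s))" for k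
    unfolding P_def
  proof (simp add: hom_distribs poly_monom, intro sum.cong refl)
    fix s
    have "[int k * (e s mod int n) = int k * e s] (mod int n)"
      by (simp add: cong_def mod_mult_right_eq)
    then show "(unity_root n 1 ^ k) ^ nat (e s mod int n) = unity_root n (int k * e s)"
      using assms(1) by (simp add: unity_root_power unity_root_cong mult.commute)
  qed
  define t' where "t' = nat (t mod int n)"
  have t': "int t' = t mod int n"
    using assms(1) by (simp add: t'_def)
  then have "coprime t' n"
    using assms(1,2) by (metis coprime_int_iff coprime_mod_left_iff coprime_iff_coprime of_nat_0_less_iff less_irrefl)
  moreover have "unity_root n 1 ^ n = 1"
    using assms(1) by (simp add: unity_root_power unity_root_eq_1_iff)
  moreover have "poly (of_int_poly P) (unity_root n 1) = 0"
    using P_eval[of 1] assms(3) by simp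
  ultimately have "poly (of_int_poly P) (unity_root n 1 ^ t') = 0"
    by (intro root_of_unity_power_coprime_root)
  moreover have "unity_root n (int t' * e s) = unity_root n (t * e s)" for s
    using assms(1) by (intro unity_root_cong cong_scalar_right) (simp_all add: t' cong_def)
  ultimately show ?thesis
    using P_eval[of t'] by simp
qed

lemma sum_unity_root_multiples:
  assumes "n > 0"
  shows "(\<Sum>k\<in>{0..<int n}. unity_root n (k * c)) = (if int n dvd c then of_nat n else 0)"
proof -
  have "{0..<int n} = int ` {..<n}"
    by (simp add: image_int_atLeastLessThan lessThan_atLeast0)
  then have "(\<Sum>k\<in>{0..<int n}. unity_root n (k * c)) = (\<Sum>k<n. unity_root n c ^ k)"
    by (simp add: sum.reindex unity_root_power)
  also have "\<dots> = (if int n dvd c then of_nat n else 0)"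
  proof (cases "int n dvd c")
    case False
    moreover have "unity_root n c ^ n = 1"
      using assms by (simp add: unity_root_power unity_root_eq_1_iff)
    ultimately show ?thesis
      using assms by (simp add: sum_gp_strict unity_root_eq_1_iff)
  next
    case True
    with assms have "unity_root n c = 1" by (simp add: unity_root_eq_1_iff)
    with True show ?thesis by simp
  qed
  finally show ?thesis .
qed


section \<open>Characters of \<open>\<int>\<^sub>p\<^sup>2 \<times> \<int>\<^sub>q\<^sup>2\<close>\<close>

lemma cong_weighted_sum_mod_mult:
  fixes x x' y y' :: int
  assumes "[x = x'] (mod p)" and "[y = y'] (mod q)"
  shows "[q * x + p * y = q * x' + p * y'] (mod p * q)"
proof -
  have "p * q dvd q * (x - x')" and "p * q dvd p * (y - y')"
    using assms by (auto simp: cong_iff_dvd_diff mult.commute[of p q] intro: mult_dvd_mono)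
  then show ?thesis
    unfolding cong_iff_dvd_diff by (metis dvd_add right_diff_distrib add_diff_add)
qed

lemma dot2_cong:
  assumes "[fst u = fst u'] (mod m)" and "[snd u = snd u'] (mod m)"
  shows "[dot2 u g = dot2 u' g] (mod m)"
  unfolding dot2_def using assms by (intro cong_add cong_mult) simp_all

lemma chi_eq_unity_root:
  assumes "p > 0" and "q > 0"
  shows "chi p q w g = unity_root (p * q) (int q * dot2 (fst w) (fst g) + int p * dot2 (snd w) (snd g))"
proof -
  define a b where "a = dot2 (fst w) (fst g)" and "b = dot2 (snd w) (snd g)"
  have "real_of_int (int q * a + int p * b) / real (p * q) = real_of_int a / real p + real_of_int b / real q"
    using assms by (simp add: add_divide_distrib)
  then have "2 * pi * of_int (int q * a + int p * b) / of_nat (p * q)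
      = 2 * pi * (real_of_int a / real p + real_of_int b / real q)"
    by (simp add: mult.assoc times_divide_eq_right[symmetric])
  then show ?thesis
    unfolding chi_def unity_root_def a_def[symmetric] b_def[symmetric]
    by (rule sym[OF arg_cong[where f = cis]])
qed

lemma chiS_cong:
  assumes "p > 0" and "q > 0"
    and "[fst u = fst u'] (mod int p)" and "[snd u = snd u'] (mod int p)"
    and "[fst v = fst v'] (mod int q)" and "[snd v = snd v'] (mod int q)"
  shows "chiS p q (u, v) S = chiS p q (u', v') S"
proof -
  have "[int q * dot2 u a + int p * dot2 v b = int q * dot2 u' a + int p * dot2 v' b] (mod int (p * q))"
    for a b
    unfolding of_nat_mult using assms(3-) by (intro cong_weighted_sum_mod_mult dot2_cong)
  then show ?thesis
    unfolding chiS_def chi_eq_unity_root[OF assms(1,2)] using assms(1,2)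
    by (intro sum.cong refl unity_root_cong) simp_all
qed

lemma chiS_scale_zero:
  assumes "p > 0" and "q > 0" and "coprime T (int (p * q))" and "chiS p q (u, v) S = 0"
  shows "chiS p q ((T * fst u, T * snd u), (T * fst v, T * snd v)) S = 0"
proof -
  have "chiS p q ((T * fst u, T * snd u), (T * fst v, T * snd v)) S
      = (\<Sum>s\<in>S. unity_root (p * q) (T * (int q * dot2 u (fst s) + int p * dot2 v (snd s))))"
    unfolding chiS_def chi_eq_unity_root[OF assms(1,2)]
    by (intro sum.cong refl arg_cong[where f = "unity_root (p * q)"]) (simp add: dot2_def algebra_simps)
  also have "\<dots> = 0"
    using assms by (intro sum_unity_root_galois) (simp_all add: chiS_def chi_eq_unity_root)
  finally show ?thesis .
qed

lemma chiS_galois: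
  assumes "prime p" and "prime q" and "p \<noteq> q"
    and "coprime s (int p)" and "coprime t (int q)" and "chiS p q (u, v) S = 0"
  shows "chiS p q ((s * fst u, s * snd u), (t * fst v, t * snd v)) S = 0"
proof -
  have "p > 0" and "q > 0" using assms(1,2) by (simp_all add: prime_gt_0_nat)
  obtain T where T: "[T = s] (mod int p)" "[T = t] (mod int q)"
    using binary_chinese_remainder_int[of "int p" "int q" s t] assms(1-3)
    by (auto simp: primes_coprime)
  have "coprime T (int p)"
    using cong_imp_coprime[OF cong_sym[OF T(1)]] assms(4) by (simp only: coprime_iff_coprime)
  moreover have "coprime T (int q)"
    using cong_imp_coprime[OF cong_sym[OF T(2)]] assms(5) by (simp only: coprime_iff_coprime)
  ultimately have "coprime T (int (p * q))"
    by (simp only: of_nat_mult coprime_iff_coprime coprime_mult_right_iff)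
  with \<open>p > 0\<close> \<open>q > 0\<close> assms(6)
  have "chiS p q ((T * fst u, T * snd u), (T * fst v, T * snd v)) S = 0"
    by (intro chiS_scale_zero)
  moreover have "chiS p q ((T * fst u, T * snd u), (T * fst v, T * snd v)) S
      = chiS p q ((s * fst u, s * snd u), (t * fst v, t * snd v)) S"
    using \<open>p > 0\<close> \<open>q > 0\<close>
    by (rule chiS_cong) (simp_all add: cong_scalar_right[OF T(1)] cong_scalar_right[OF T(2)])
  ultimately show ?thesis by simp
qed

lemma cong_inverse_mod_prime:
  fixes m :: int
  assumes "prime m" and "\<not> m dvd j"
  obtains s where "[j * s = 1] (mod m)" and "coprime s m"
proof -
  have "coprime j m"
    using assms by (metis prime_imp_coprime coprime_iff_coprime coprime_commute)
  then obtain s where s: "[j * s = 1] (mod m)"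
    using cong_solve_coprime_int by (metis coprime_iff_coprime)
  moreover have "coprime s m"
    using cong_imp_coprime[OF cong_sym[OF s]] by (simp add: coprime_iff_coprime)
  ultimately show thesis by (rule that)
qed

lemma chiS_zero_of_unit_multiple:
  assumes "prime p" and "prime q" and "p \<noteq> q"
    and "\<not> int p dvd j" and "\<not> int q dvd k"
    and "[fst u' = j * fst u] (mod int p)" and "[snd u' = j * snd u] (mod int p)"
    and "[fst v' = k * fst v] (mod int q)" and "[snd v' = k * snd v] (mod int q)"
    and "chiS p q (u', v') S = 0"
  shows "chiS p q (u, v) S = 0"
proof -
  have "p > 0" and "q > 0" using assms(1,2) by (simp_all add: prime_gt_0_nat)
  obtain s where s: "[j * s = 1] (mod int p)" "coprime s (int p)"
    using assms(1,4) by (metis prime_nat_int_transfer cong_inverse_mod_prime)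
  obtain t where t: "[k * t = 1] (mod int q)" "coprime t (int q)"
    using assms(2,5) by (metis prime_nat_int_transfer cong_inverse_mod_prime)
  have "chiS p q ((s * fst u', s * snd u'), (t * fst v', t * snd v')) S = 0"
    using chiS_galois[OF assms(1-3) s(2) t(2) assms(10)] by simp
  moreover have "[s * x' = x] (mod int p)" if "[x' = j * x] (mod int p)" for x x'
  proof -
    have "[s * x' = s * (j * x)] (mod int p)" using that by (rule cong_scalar_left)
    also have "[s * (j * x) = 1 * x] (mod int p)"
      using s(1) by (metis cong_scalar_right mult.assoc mult.commute)
    finally show ?thesis by simp
  qed
  moreover have "[t * y' = y] (mod int q)" if "[y' = k * y] (mod int q)" for y y'
  proof -
    have "[t * y' = t * (k * y)] (mod int q)" using that by (rule cong_scalar_left)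
    also have "[t * (k * y) = 1 * y] (mod int q)"
      using t(1) by (metis cong_scalar_right mult.assoc mult.commute)
    finally show ?thesis by simp
  qed
  ultimately show ?thesis
    using chiS_cong[OF \<open>p > 0\<close> \<open>q > 0\<close>] assms(6-9) by (metis fst_conv snd_conv)
qed

lemma Zsq_cong_imp_eq:
  assumes "x \<in> Zsq m" and "y \<in> Zsq m"
    and "[fst x = fst y] (mod int m)" and "[snd x = snd y] (mod int m)"
  shows "x = y"
proof -
  have "fst x = fst y"
    using assms(1-3) by (intro cong_less_imp_eq_int) (auto simp: Zsq_def)
  moreover have "snd x = snd y"
    using assms(1,2,4) by (intro cong_less_imp_eq_int) (auto simp: Zsq_def)
  ultimately show ?thesis by (simp add: prod_eq_iff)
qed

lemma Zsq_nonzero_not_dvd: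
  assumes "x \<in> Zsq m" and "x \<noteq> (0, 0)"
  shows "\<not> (int m dvd fst x \<and> int m dvd snd x)"
proof
  assume "int m dvd fst x \<and> int m dvd snd x"
  then have "[fst x = fst (0, 0)] (mod int m)" and "[snd x = snd (0, 0)] (mod int m)"
    by (simp_all add: cong_0_iff)
  moreover have "(0, 0) \<in> Zsq m"
    using assms(1) by (auto simp: Zsq_def)
  ultimately have "x = (0, 0)"
    using Zsq_cong_imp_eq[OF assms(1)] by blast
  with assms(2) show False ..
qed

lemma sum_Zsq_unity_root_dot2:
  assumes "q > 0" and "b \<in> Zsq q"
  shows "(\<Sum>y\<in>Zsq q. unity_root q (dot2 y b)) = (if b = (0, 0) then of_nat (q * q) else 0)"
proof -
  have "(\<Sum>y\<in>Zsq q. unity_root q (dot2 y b))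
      = (\<Sum>y1\<in>{0..<int q}. unity_root q (y1 * fst b)) * (\<Sum>y2\<in>{0..<int q}. unity_root q (y2 * snd b))"
    unfolding Zsq_def dot2_def
    by (simp add: unity_root_add sum.cartesian_product sum_product split_def)
  moreover have "int q dvd fst b \<and> int q dvd snd b \<longleftrightarrow> b = (0, 0)"
    using assms Zsq_nonzero_not_dvd[OF assms(2)] by auto
  ultimately show ?thesis
    using assms(1) by (auto simp: sum_unity_root_multiples)
qed

lemma chi_zero_fst: "chi p q ((0, 0), y) s = unity_root q (dot2 y (snd s))"
  unfolding chi_def unity_root_def dot2_def by simp

lemma square_dvd_card_of_chiS_zero:
  assumes "q > 0" and "S \<subseteq> Gset p q"
    and zero: "\<forall>y\<in>Zsq q. y \<noteq> (0, 0) \<longrightarrow> chiS p q ((0, 0), y) S = 0"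
  shows "q\<^sup>2 dvd card S"
proof -
  have "finite S"
    using assms(2) finite_subset unfolding Gset_def Zsq_def by blast
  have "(0, 0) \<in> Zsq q" and "finite (Zsq q)"
    using assms(1) by (simp_all add: Zsq_def)
  then have "(\<Sum>y\<in>Zsq q. chiS p q ((0, 0), y) S)
      = chiS p q ((0, 0), (0, 0)) S + (\<Sum>y\<in>Zsq q - {(0, 0)}. chiS p q ((0, 0), y) S)"
    by (simp add: sum.remove)
  also have "(\<Sum>y\<in>Zsq q - {(0, 0)}. chiS p q ((0, 0), y) S) = 0"
    using zero by (intro sum.neutral) blast
  also have "chiS p q ((0, 0), (0, 0)) S = of_nat (card S)"
    by (simp add: chiS_def chi_zero_fst dot2_def unity_root_def)
  finally have "of_nat (card S) = (\<Sum>s\<in>S. \<Sum>y\<in>Zsq q. unity_root q (dot2 y (snd s)))"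
    unfolding chiS_def chi_zero_fst by (simp add: sum.swap[of _ S])
  also have "\<dots> = (\<Sum>s\<in>S. if snd s = (0, 0) then of_nat (q * q) else 0)"
    using assms(2) by (intro sum.cong refl sum_Zsq_unity_root_dot2[OF assms(1)]) (auto simp: Gset_def)
  also have "\<dots> = of_nat (q * q * card {s\<in>S. snd s = (0, 0)})"
    using \<open>finite S\<close> by (simp add: sum.If_cases Int_def conj_commute)
  finally have "card S = q * q * card {s\<in>S. snd s = (0, 0)}"
    by (simp only: of_nat_eq_iff)
  then show ?thesis by (simp add: power2_eq_square)
qed


section \<open>Spectral sets\<close>

definition det2 :: "int \<times> int \<Rightarrow> int \<times> int \<Rightarrow> int" where
  "det2 x y = fst x * snd y - snd x * fst y"

lemma dvd_cross_diff_imp_multiple: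
  fixes m :: int
  assumes "prime m" and "\<not> m dvd x1" and "m dvd x1 * e2 - x2 * e1"
  shows "\<exists>j. m dvd e1 - j * x1 \<and> m dvd e2 - j * x2"
proof -
  obtain v where "[x1 * v = 1] (mod m)"
    using cong_inverse_mod_prime[OF assms(1,2)] by blast
  then have v: "m dvd x1 * v - 1" by (simp add: cong_iff_dvd_diff)
  have "e1 - (e1 * v) * x1 = - e1 * (x1 * v - 1)"
    by (simp add: algebra_simps)
  then have "m dvd e1 - (e1 * v) * x1"
    using v by (simp add: dvd_mult)
  moreover have "e2 - (e1 * v) * x2 = - e2 * (x1 * v - 1) + v * (x1 * e2 - x2 * e1)"
    by (simp add: algebra_simps)
  then have "m dvd e2 - (e1 * v) * x2"
    using v assms(3) by (simp add: dvd_add dvd_mult)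
  ultimately show ?thesis by blast
qed

lemma dvd_det2_imp_multiple:
  fixes m :: int
  assumes "prime m" and "\<not> (m dvd fst u \<and> m dvd snd u)" and "m dvd det2 u d"
  obtains j where "[fst d = j * fst u] (mod m)" and "[snd d = j * snd u] (mod m)"
proof -
  have "\<exists>j. m dvd fst d - j * fst u \<and> m dvd snd d - j * snd u"
  proof (cases "m dvd fst u")
    case False
    with assms show ?thesis by (intro dvd_cross_diff_imp_multiple) (simp_all add: det2_def)
  next
    case True
    with assms(2) have "\<not> m dvd snd u" by blast
    moreover have "m dvd snd u * fst d - fst u * snd d"
      using assms(3) by (metis det2_def dvd_minus_iff minus_diff_eq)
    ultimately show ?thesis
      using dvd_cross_diff_imp_multiple[OF assms(1)] by blast
  qed
  then show thesis
    using that by (auto simp: cong_iff_dvd_diff)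
qed

lemma det2_cong_diff:
  assumes "[x = fst a - fst b] (mod m)" and "[x' = snd a - snd b] (mod m)"
  shows "[det2 u (x, x') = det2 u a - det2 u b] (mod m)"
proof -
  have "[det2 u (x, x') = det2 u (fst a - fst b, snd a - snd b)] (mod m)"
    unfolding det2_def using assms by (intro cong_diff cong_mult cong_refl) simp_all
  also have "det2 u (fst a - fst b, snd a - snd b) = det2 u a - det2 u b"
    by (simp add: det2_def algebra_simps)
  finally show ?thesis .
qed

lemma subG_in_Gset: "p > 0 \<Longrightarrow> q > 0 \<Longrightarrow> subG p q l m \<in> Gset p q"
  unfolding subG_def Gset_def Zsq_def by simp

lemma subG_eq_0_imp_eq:
  assumes "l \<in> Gset p q" and "m \<in> Gset p q" and "subG p q l m = ((0, 0), (0, 0))"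
  shows "l = m"
proof -
  have "fst l = fst m" "snd l = snd m"
    using assms Zsq_cong_imp_eq unfolding Gset_def subG_def
    by (auto simp: cong_iff_dvd_diff mod_eq_0_iff_dvd)
  then show ?thesis by (simp add: prod_eq_iff)
qed

lemma det2_fst_subG_cong:
  "[det2 u (fst (subG p q l m)) = det2 u (fst l) - det2 u (fst m)] (mod int p)"
  unfolding subG_def fst_conv by (intro det2_cong_diff) (simp_all add: cong_def)

lemma det2_snd_subG_cong:
  "[det2 y (snd (subG p q l m)) = det2 y (snd l) - det2 y (snd m)] (mod int q)"
  unfolding subG_def snd_conv by (intro det2_cong_diff) (simp_all add: cong_def)

lemma chiS_zero_on_line_fst:
  assumes "prime p" and "prime q" and "p \<noteq> q"
    and u: "u \<in> Zsq p" "u \<noteq> (0, 0)" "\<forall>x\<in>Zsq q. chiS p q (u, x) S \<noteq> 0"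
    and w: "w \<in> Gset p q" "chiS p q w S = 0" "int p dvd det2 u (fst w)"
  shows "fst w = (0, 0)"
proof -
  have "p > 0" and "q > 1" using assms(1,2) prime_gt_0_nat prime_gt_1_nat by blast+
  have Zsq: "fst w \<in> Zsq p" "snd w \<in> Zsq q" "(0, 0) \<in> Zsq p"
    using w(1) \<open>p > 0\<close> by (auto simp: Gset_def Zsq_def)
  obtain j where j: "[fst (fst w) = j * fst u] (mod int p)" "[snd (fst w) = j * snd u] (mod int p)"
    using dvd_det2_imp_multiple[of "int p" u "fst w"] assms(1) Zsq_nonzero_not_dvd[OF u(1,2)] w(3)
    by auto
  have "int p dvd j"
  proof (rule ccontr)
    assume "\<not> int p dvd j"
    then have "chiS p q (u, snd w) S = 0"
      using chiS_zero_of_unit_multiple[OF assms(1-3), of j 1 "fst w" u "snd w" "snd w"] j w(2)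
        \<open>q > 1\<close> by simp
    with u(3) Zsq(2) show False by blast
  qed
  then have "int p dvd fst (fst w)" and "int p dvd snd (fst w)"
    using cong_dvd_iff[OF j(1)] cong_dvd_iff[OF j(2)] by simp_all
  then show ?thesis
    using Zsq_cong_imp_eq[OF Zsq(1,3)] by (simp add: cong_0_iff)
qed

lemma chiS_zero_on_line_snd:
  assumes "prime p" and "prime q" and "p \<noteq> q"
    and y: "y \<in> Zsq q" "y \<noteq> (0, 0)" "chiS p q ((0, 0), y) S \<noteq> 0"
    and v: "v \<in> Zsq q" "chiS p q ((0, 0), v) S = 0" "int q dvd det2 y v"
  shows "v = (0, 0)"
proof -
  have "q > 0" and "p > 1" using assms(1,2) prime_gt_0_nat prime_gt_1_nat by blast+
  then have "(0, 0) \<in> Zsq q" by (simp add: Zsq_def)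
  obtain k where k: "[fst v = k * fst y] (mod int q)" "[snd v = k * snd y] (mod int q)"
    using dvd_det2_imp_multiple[of "int q" y v] assms(2) Zsq_nonzero_not_dvd[OF y(1,2)] v(3)
    by auto
  have "int q dvd k"
  proof (rule ccontr)
    assume "\<not> int q dvd k"
    then have "chiS p q ((0, 0), y) S = 0"
      using chiS_zero_of_unit_multiple[OF assms(1-3), of 1 k "(0, 0)" "(0, 0)" v y] k v(2)
        \<open>p > 1\<close> by simp
    with y(3) show False by blast
  qed
  then have "int q dvd fst v" and "int q dvd snd v"
    using cong_dvd_iff[OF k(1)] cong_dvd_iff[OF k(2)] by simp_all
  then show ?thesis
    using Zsq_cong_imp_eq[OF v(1) \<open>(0, 0) \<in> Zsq q\<close>] by (simp add: cong_0_iff)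
qed

lemma spectral_zero_in_every_first_direction:
  assumes "prime p" and "prime q" and "p \<noteq> q" and "S \<subseteq> Gset p q" and "spectral p q S"
    and "p * q < card S" and "\<not> q\<^sup>2 dvd card S"
  shows "\<forall>u\<in>Zsq p. u \<noteq> (0, 0) \<longrightarrow> (\<exists>x\<in>Zsq q. chiS p q (u, x) S = 0)"
proof (intro ballI impI, rule ccontr)
  fix u assume u: "u \<in> Zsq p" "u \<noteq> (0, 0)" and no_zero: "\<not> (\<exists>x\<in>Zsq q. chiS p q (u, x) S = 0)"
  have "p > 0" and "q > 0" using assms(1,2) by (simp_all add: prime_gt_0_nat)
  obtain L where L: "L \<subseteq> Gset p q" "card L = card S"
    and orth: "\<And>l m. l \<in> L \<Longrightarrow> m \<in> L \<Longrightarrow> l \<noteq> m \<Longrightarrow> chiS p q (subG p q l m) S = 0"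
    using assms(5) unfolding spectral_def by blast
  obtain y where y: "y \<in> Zsq q" "y \<noteq> (0, 0)" "chiS p q ((0, 0), y) S \<noteq> 0"
    using square_dvd_card_of_chiS_zero[OF \<open>q > 0\<close> assms(4)] assms(7) by blast
  define \<phi> where "\<phi> l = (det2 u (fst l) mod int p, det2 y (snd l) mod int q)" for l :: elt
  have "inj_on \<phi> L"
  proof (rule inj_onI, rule ccontr)
    fix l m assume "l \<in> L" "m \<in> L" "\<phi> l = \<phi> m" "l \<noteq> m"
    define w where "w = subG p q l m"
    have "int p dvd det2 u (fst l) - det2 u (fst m)" and "int q dvd det2 y (snd l) - det2 y (snd m)"
      using \<open>\<phi> l = \<phi> m\<close> unfolding \<phi>_def by (simp_all add: mod_eq_dvd_iff)
    then have "int p dvd det2 u (fst w)" and "int q dvd det2 y (snd w)"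
      unfolding w_def using cong_dvd_iff[OF det2_fst_subG_cong] cong_dvd_iff[OF det2_snd_subG_cong]
      by blast+
    moreover have "w \<in> Gset p q" "chiS p q w S = 0"
      using subG_in_Gset[OF \<open>p > 0\<close> \<open>q > 0\<close>] orth \<open>l \<in> L\<close> \<open>m \<in> L\<close> \<open>l \<noteq> m\<close>
      by (simp_all add: w_def)
    ultimately have "fst w = (0, 0)"
      using chiS_zero_on_line_fst[OF assms(1-3) u no_zero[simplified]] by blast
    moreover have "snd w \<in> Zsq q" and "chiS p q ((0, 0), snd w) S = 0"
      using \<open>w \<in> Gset p q\<close> \<open>chiS p q w S = 0\<close> \<open>fst w = (0, 0)\<close>
      by (auto simp: Gset_def)
    ultimately have "w = ((0, 0), (0, 0))"
      using chiS_zero_on_line_snd[OF assms(1-3) y] \<open>int q dvd det2 y (snd w)\<close>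
      by (simp add: prod_eq_iff)
    then show False
      using subG_eq_0_imp_eq \<open>l \<in> L\<close> \<open>m \<in> L\<close> \<open>l \<noteq> m\<close> L(1) unfolding w_def by blast
  qed
  moreover have "\<phi> ` L \<subseteq> {0..<int p} \<times> {0..<int q}"
    using \<open>p > 0\<close> \<open>q > 0\<close> by (auto simp: \<phi>_def)
  ultimately have "card L \<le> card ({0..<int p} \<times> {0..<int q})"
    by (intro card_inj_on_le) simp_all
  with L(2) assms(6) show False
    by (simp add: card_cartesian_product)
qed

lemma Gset_swap: "prod.swap ` Gset p q = Gset q p"
  unfolding Gset_def by auto

lemma chiS_swap: "chiS q p (b, a) (prod.swap ` S) = chiS p q (a, b) S"
  unfolding chiS_def chi_def by (simp add: sum.reindex add.commute)

lemma chiS_prod_swap: "chiS q p (prod.swap w) (prod.swap ` S) = chiS p q w S"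
  by (cases w) (simp add: chiS_swap)

lemma subG_swap: "subG q p (prod.swap l) (prod.swap m) = prod.swap (subG p q l m)"
  unfolding subG_def by simp

lemma spectral_swap:
  assumes "spectral p q S"
  shows "spectral q p (prod.swap ` S)"
proof -
  obtain L where L: "L \<subseteq> Gset p q" "card L = card S"
    and orth: "\<forall>l\<in>L. \<forall>m\<in>L. l \<noteq> m \<longrightarrow> chiS p q (subG p q l m) S = 0"
    using assms unfolding spectral_def by blast
  have "prod.swap ` L \<subseteq> Gset q p"
    using L(1) Gset_swap by blast
  moreover have "card (prod.swap ` L) = card (prod.swap ` S)"
    using L(2) by (simp add: card_image)
  moreover have "\<forall>l\<in>prod.swap ` L. \<forall>m\<in>prod.swap ` L. l \<noteq> m \<longrightarrow>
      chiS q p (subG q p l m) (prod.swap ` S) = 0"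
    using orth by (auto simp: subG_swap chiS_prod_swap)
  ultimately show ?thesis
    unfolding spectral_def by blast
qed

lemma not_square_dvd_of_gcd_eq:
  fixes c p q :: nat
  assumes "prime p" and "prime q" and "p \<noteq> q" and "gcd c (p\<^sup>2 * q\<^sup>2) = p * q"
  shows "\<not> q\<^sup>2 dvd c"
proof
  assume "q\<^sup>2 dvd c"
  moreover have "q\<^sup>2 dvd p\<^sup>2 * q\<^sup>2" by simp
  ultimately have "q\<^sup>2 dvd gcd c (p\<^sup>2 * q\<^sup>2)" by (rule gcd_greatest)
  then have "q * q dvd p * q" unfolding assms(4) by (simp add: power2_eq_square)
  moreover have "q \<noteq> 0" using assms(2) by auto
  ultimately have "q dvd p" by simp
  with primes_dvd_imp_eq[OF assms(2,1)] assms(3) show False by simp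
qed

theorem lemma4p6:
  fixes p q :: nat and S :: "elt set"
  assumes "prime p" and "prime q" and "p \<noteq> q"
    and "S \<subseteq> Gset p q"
    and "spectral p q S"
    and "gcd (card S) (p^2 * q^2) = p * q"
    and "p * q < card S" and "card S < p * q * min p q"
  shows "(\<forall>u\<in>Zsq p. u \<noteq> (0,0) \<longrightarrow> (\<exists>x\<in>Zsq q. chiS p q (u, x) S = 0)) \<and>
         (\<forall>v\<in>Zsq q. v \<noteq> (0,0) \<longrightarrow> (\<exists>y\<in>Zsq p. chiS p q (y, v) S = 0))"
proof
  show "\<forall>u\<in>Zsq p. u \<noteq> (0,0) \<longrightarrow> (\<exists>x\<in>Zsq q. chiS p q (u, x) S = 0)"
    using spectral_zero_in_every_first_direction[OF assms(1-5,7)]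
      not_square_dvd_of_gcd_eq[OF assms(1-3,6)] by blast
  have "\<forall>v\<in>Zsq q. v \<noteq> (0,0) \<longrightarrow> (\<exists>x\<in>Zsq p. chiS q p (v, x) (prod.swap ` S) = 0)"
  proof (rule spectral_zero_in_every_first_direction)
    show "prod.swap ` S \<subseteq> Gset q p" using assms(4) Gset_swap by blast
    show "\<not> p\<^sup>2 dvd card (prod.swap ` S)"
      using not_square_dvd_of_gcd_eq[of q p "card S"] assms(1-3,6)
      by (simp add: card_image mult.commute)
  qed (use assms spectral_swap in \<open>simp_all add: card_image mult.commute\<close>)
  then show "\<forall>v\<in>Zsq q. v \<noteq> (0,0) \<longrightarrow> (\<exists>y\<in>Zsq p. chiS p q (y, v) S = 0)"
    by (simp add: chiS_swap)
qed

end
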